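(* Let $p$ be a prime and let $a,b$ be integers with $0<a,b<p$. The following are equivalent: (1) $S^G_{a,b}$ is generated by 4 invariants, i.e. $|\mathrm{inv}_{a,b}|=4$ (equivalently, $\operatorname{codim}\ker\varphi_{a,b}=2$); (2) $\bigl(p-(a^{-1}b)_p\bigr)\bigl(p-(ab^{-1})_p\bigr)=p+1$.
   Context: Let $S=\mathbb{C}[x_1,x_2]$ with its standard grading, $\zeta=e^{2\pi i/p}$ and $G=\mathbb{Z}/p\mathbb{Z}=\langle\zeta\rangle$. For integers $a,b$, $G$ acts on $S$ by the $\mathbb{C}$-algebra automorphisms determined by $x_1\mapsto\zeta^a x_1$, $x_2\mapsto \zeta^b x_2$; $S^G_{a,b}$ denotes the ring of invariants. It is spanned by the invariant monomials $x_1^cx_2^d$, i.e. those with $ac+bd\equiv 0 \pmod p$. $\mathrm{inv}_{a,b}$ denotes the minimal set of monomial generators of $S^G_{a,b}$ as a $\mathbb{C}$-algebra: the nonconstant invariant monomials that are not a product of two nonconstant invariant monomials. "$S^G_{a,b}$ is generated by $k$ invariants" means $|\mathrm{inv}_{a,b}|=k$. Writing $\mathrm{inv}_{a,b}=\{z_0,\dots,z_n\}$ in lexicographic order with $x_1>x_2$, let $R=\mathbb{C}[y_0,\dots,y_n]$ with $\deg y_i=\deg z_i$ and let $\varphi_{a,b}:R\to S^G_{a,b}$ be the $\mathbb{C}$-algebra map $y_i\mapsto z_i$. For an integer $c$, $c_p$ denotes the unique integer $0\le c_p<p$ with $c\equiv c_p\pmod p$, and for $c$ not divisible by $p$, $c^{-1}$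 denotes the unique integer $0<c^{-1}<p$ with $cc^{-1}\equiv 1\pmod p$. *)

theory Defs
  imports "HOL-Number_Theory.Number_Theory"
begin

text \<open>A monomial x1^c x2^d is represented by its exponent pair (c,d).
  It is invariant under the action x1 -> zeta^a x1, x2 -> zeta^b x2 iff a c + b d = 0 mod p.\<close>

definition invariant_mono :: "int \<Rightarrow> int \<Rightarrow> int \<Rightarrow> nat \<times> nat \<Rightarrow> bool" where
  "invariant_mono p a b m \<longleftrightarrow> [a * int (fst m) + b * int (snd m) = 0] (mod p)"

definition nonconst_inv :: "int \<Rightarrow> int \<Rightarrow> int \<Rightarrow> (nat \<times> nat) set" where
  "nonconst_inv p a b = {m. invariant_mono p a b m \<and> m \<noteq> (0, 0)}"

definition inv_gens :: "int \<Rightarrow> int \<Rightarrow> int \<Rightarrow> (nat \<times> nat) set" where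
  "inv_gens p a b = {m \<in> nonconst_inv p a b.
      \<not> (\<exists>u \<in> nonconst_inv p a b. \<exists>v \<in> nonconst_inv p a b.
            fst m = fst u + fst v \<and> snd m = snd u + snd v)}"

definition inv_modp :: "int \<Rightarrow> int \<Rightarrow> int" where
  "inv_modp p c = (THE x. 0 < x \<and> x < p \<and> [c * x = 1] (mod p))"

end

theory Submission
  imports Defs
begin

(* Multiplying both weights by a^-1 normalises the action to weights (1, -q) with
   q = p - (a^-1 b)_p, whose inverse mod p is j0 = p - (a b^-1)_p; a monomial x1^i x2^j is then
   invariant iff i = q j (mod p). Invariant exponents are closed under componentwise differences,
   so the minimal generators are the componentwise-minimal nonzero invariant exponents. These
   always include (p,0), (0,p), (q,1), (1,j0), and every other one lies in the box 0 < i < q,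
   0 < j < j0. A point of that box with i = q j (mod p) has p < q j, which is impossible when
   q j0 = p + 1; otherwise, for q > 1, the point (q k - p, k) with k the least j such that p < q j
   is a fifth generator, while for q = 1 there are only three. *)

lemma invariant_mono_diff:
  assumes "invariant_mono p a b m" "invariant_mono p a b u"
    and "fst u \<le> fst m" "snd u \<le> snd m"
  shows "invariant_mono p a b (fst m - fst u, snd m - snd u)"
proof -
  have "[(a * int (fst m) + b * int (snd m)) - (a * int (fst u) + b * int (snd u)) = 0 - 0] (mod p)"
    using assms(1,2) unfolding invariant_mono_def by (rule cong_diff)
  with assms(3,4) show ?thesis
    by (simp add: invariant_mono_def of_nat_diff algebra_simps)
qed

lemma inv_gens_iff_minimal:
  "m \<in> inv_gens p a b \<longleftrightarrow> m \<in> nonconst_inv p a b \<and>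
     (\<forall>u \<in> nonconst_inv p a b. fst u \<le> fst m \<longrightarrow> snd u \<le> snd m \<longrightarrow> u = m)"
  (is "_ \<longleftrightarrow> ?minimal")
proof
  assume m: "m \<in> inv_gens p a b"
  then have m_inv: "m \<in> nonconst_inv p a b" by (simp add: inv_gens_def)
  have "u = m" if u: "u \<in> nonconst_inv p a b" "fst u \<le> fst m" "snd u \<le> snd m" for u
  proof (rule ccontr)
    assume "u \<noteq> m"
    define v where "v = (fst m - fst u, snd m - snd u)"
    have "v \<in> nonconst_inv p a b"
      using invariant_mono_diff[of p a b m u] m_inv u \<open>u \<noteq> m\<close>
      by (auto simp: nonconst_inv_def v_def prod_eq_iff)
    moreover have "fst m = fst u + fst v" "snd m = snd u + snd v"
      using u by (simp_all add: v_def)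
    ultimately show False using m u(1) unfolding inv_gens_def by blast
  qed
  with m_inv show ?minimal by blast
next
  assume m: ?minimal
  have False if "u \<in> nonconst_inv p a b" "v \<in> nonconst_inv p a b"
      "fst m = fst u + fst v" "snd m = snd u + snd v" for u v
  proof -
    have "u = m" using m that by simp
    with that have "v = (0, 0)" by (simp add: prod_eq_iff)
    with that(2) show False by (simp add: nonconst_inv_def)
  qed
  with m show "m \<in> inv_gens p a b" unfolding inv_gens_def by blast
qed

lemma inv_gens_minimal:
  "m \<in> inv_gens p a b \<Longrightarrow> u \<in> nonconst_inv p a b \<Longrightarrow> fst u \<le> fst m \<Longrightarrow> snd u \<le> snd m
    \<Longrightarrow> u = m"
  by (simp add: inv_gens_iff_minimal)

lemma inv_gensI:
  assumes "(i, j) \<in> nonconst_inv p a b"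
    and "\<And>i' j'. (i', j') \<in> nonconst_inv p a b \<Longrightarrow> i' \<le> i \<Longrightarrow> j' \<le> j \<Longrightarrow> (i', j') = (i, j)"
  shows "(i, j) \<in> inv_gens p a b"
  using assms by (auto simp: inv_gens_iff_minimal)

lemma inv_gens_subset: "inv_gens p a b \<subseteq> nonconst_inv p a b"
  by (auto simp: inv_gens_def)

lemma invariant_mono_cong:
  assumes "[a = a'] (mod p)" "[b = b'] (mod p)"
  shows "invariant_mono p a b = invariant_mono p a' b'"
proof
  fix m
  have "[a * int (fst m) + b * int (snd m) = a' * int (fst m) + b' * int (snd m)] (mod p)"
    using assms by (intro cong_add cong_mult cong_refl)
  then show "invariant_mono p a b m = invariant_mono p a' b' m"
    unfolding invariant_mono_def using cong_sym cong_trans by blast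
qed

lemma invariant_mono_mult:
  assumes "coprime c p"
  shows "invariant_mono p (c * a) (c * b) = invariant_mono p a b"
proof
  fix m
  have "[c * (a * int (fst m) + b * int (snd m)) = c * 0] (mod p)
      \<longleftrightarrow> [a * int (fst m) + b * int (snd m) = 0] (mod p)"
    using assms by (rule cong_mult_lcancel)
  then show "invariant_mono p (c * a) (c * b) m = invariant_mono p a b m"
    unfolding invariant_mono_def by (simp add: distrib_left mult.assoc)
qed

lemma inv_gens_eqI:
  "invariant_mono p a b = invariant_mono p a' b' \<Longrightarrow> inv_gens p a b = inv_gens p a' b'"
  by (simp add: inv_gens_def nonconst_inv_def)

lemma inv_modp_correct:
  fixes p c :: int
  assumes "prime p" "\<not> p dvd c"
  shows "0 < inv_modp p c \<and> inv_modp p c < p \<and> [c * inv_modp p c = 1] (mod p)"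
proof -
  have p_gt_1: "1 < p" using assms(1) prime_gt_1_int by blast
  have coprime: "coprime c p"
    using assms prime_imp_coprime coprime_commute by blast
  then obtain x where x: "[c * x = 1] (mod p)" using cong_solve_coprime_int by blast
  have "[c * (x mod p) = c * x] (mod p)"
    by (simp add: cong_def mod_mult_right_eq)
  from cong_trans[OF this x] have y: "[c * (x mod p) = 1] (mod p)" .
  have "x mod p \<noteq> 0"
  proof
    assume "x mod p = 0"
    with y have "1 mod p = 0" by (simp add: cong_def)
    with p_gt_1 show False by (simp add: mod_pos_pos_trivial)
  qed
  moreover have "0 \<le> x mod p" "x mod p < p" using p_gt_1 by simp_all
  ultimately have y_range: "0 < x mod p" "x mod p < p" by simp_all
  have unique: "z = x mod p" if z: "0 < z \<and> z < p \<and> [c * z = 1] (mod p)" for z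
  proof -
    have "[c * z = c * (x mod p)] (mod p)" using cong_trans[OF _ cong_sym[OF y]] z by simp
    then have "[z = x mod p] (mod p)" using coprime cong_mult_lcancel by blast
    from cong_less_imp_eq_int[OF _ _ _ _ this] show ?thesis using z y_range by simp
  qed
  have "inv_modp p c = x mod p"
    unfolding inv_modp_def by (rule the_equality) (use y y_range in simp, erule unique)
  then show ?thesis using y y_range by simp
qed

locale normal_action =
  fixes p q j0 :: nat
  assumes prime: "prime p"
    and q_pos: "0 < q" and q_less: "q < p"
    and j0_less: "j0 < p" and q_j0: "[q * j0 = 1] (mod p)"
begin

abbreviation invs :: "(nat \<times> nat) set" where
  "invs \<equiv> nonconst_inv (int p) 1 (- int q)"

abbreviation gens :: "(nat \<times> nat) set" where
  "gens \<equiv> inv_gens (int p) 1 (- int q)"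

abbreviation corners :: "(nat \<times> nat) set" where
  "corners \<equiv> {(p, 0), (0, p), (q, 1), (1, j0)}"

lemma p_gt_1: "1 < p"
  using prime prime_gt_1_nat by blast

lemma not_dvd_q: "\<not> p dvd q"
  using q_pos q_less by (auto dest: dvd_imp_le)

lemma coprime_q: "coprime q p"
  using prime not_dvd_q prime_imp_coprime coprime_commute by blast

lemma mem_invs_iff: "(i, j) \<in> invs \<longleftrightarrow> [i = q * j] (mod p) \<and> (i, j) \<noteq> (0, 0)"
proof -
  have "[1 * int i + - int q * int j = 0] (mod int p) \<longleftrightarrow> [int i = int (q * j)] (mod int p)"
    by (simp add: cong_iff_dvd_diff cong_0_iff)
  also have "\<dots> \<longleftrightarrow> [i = q * j] (mod p)"
    by (rule cong_int_iff)
  finally show ?thesis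
    by (simp add: nonconst_inv_def invariant_mono_def)
qed

lemma j0_unique:
  assumes "[q * k = 1] (mod p)" "k < p"
  shows "k = j0"
proof -
  have "[q * k = q * j0] (mod p)"
    using cong_trans[OF assms(1) cong_sym[OF q_j0]] .
  then have "[k = j0] (mod p)"
    using cong_mult_lcancel_nat[OF coprime_q] by blast
  from cong_less_imp_eq_nat[OF _ _ _ _ this] show ?thesis
    using assms(2) j0_less by simp
qed

lemma p_le_fst_on_axis: "(i, 0) \<in> invs \<Longrightarrow> p \<le> i"
  by (auto simp: mem_invs_iff cong_0_iff dest: dvd_imp_le)

lemma p_le_snd_on_axis:
  assumes "(0, j) \<in> invs"
  shows "p \<le> j"
proof -
  have "[q * j = 0] (mod p)" "j \<noteq> 0"
    using assms by (auto simp: mem_invs_iff intro: cong_sym)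
  then have "p dvd q * j" "j \<noteq> 0" by (simp_all add: cong_0_iff)
  with not_dvd_q show ?thesis
    using prime prime_dvd_mult_iff by (auto dest: dvd_imp_le)
qed

lemma p_less_q_mult_snd:
  assumes "(i, j) \<in> invs" "0 < i" "i < q"
  shows "p < q * j"
proof (rule ccontr)
  assume "\<not> p < q * j"
  have i_cong: "[i = q * j] (mod p)" using assms(1) by (simp add: mem_invs_iff)
  show False
  proof (cases "q * j = p")
    case True
    with i_cong have "p dvd i" by (simp add: cong_def dvd_eq_mod_eq_0)
    with assms(2,3) q_less show False by (auto dest: dvd_imp_le)
  next
    case False
    with \<open>\<not> p < q * j\<close> have "q * j < p" by simp
    with cong_less_imp_eq_nat[OF _ _ _ _ i_cong] have "i = q * j"
      using assms(3) q_less by simp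
    with assms(2,3) show False by (cases j) auto
  qed
qed

lemma corners_subset_gens: "corners \<subseteq> gens"
proof -
  have "(p, 0) \<in> gens"
  proof (rule inv_gensI)
    show "(p, 0) \<in> invs" using p_gt_1 by (simp add: mem_invs_iff cong_def)
  next
    fix i j assume "(i, j) \<in> invs" "i \<le> p" "j \<le> 0"
    then show "(i, j) = (p, 0)" using p_le_fst_on_axis by fastforce
  qed
  moreover have "(0, p) \<in> gens"
  proof (rule inv_gensI)
    show "(0, p) \<in> invs" using p_gt_1 by (simp add: mem_invs_iff cong_def)
  next
    fix i j assume "(i, j) \<in> invs" "i \<le> 0" "j \<le> p"
    then show "(i, j) = (0, p)" using p_le_snd_on_axis by fastforce
  qed
  moreover have "(q, 1) \<in> gens"
  proof (rule inv_gensI)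
    show "(q, 1) \<in> invs" using q_pos by (simp add: mem_invs_iff)
  next
    fix i j assume ij: "(i, j) \<in> invs" "i \<le> q" "j \<le> 1"
    have "i \<noteq> 0"
    proof
      assume "i = 0"
      with ij have "p \<le> j" using p_le_snd_on_axis by simp
      with ij p_gt_1 show False by simp
    qed
    moreover have "\<not> i < q"
    proof
      assume "i < q"
      with ij \<open>i \<noteq> 0\<close> have "p < q * j" using p_less_q_mult_snd by simp
      moreover have "q * j \<le> q" using \<open>j \<le> 1\<close> by simp
      ultimately show False using q_less by simp
    qed
    moreover have "j \<noteq> 0"
    proof
      assume "j = 0"
      with ij have "p \<le> i" using p_le_fst_on_axis by simp
      with ij q_less show False by simp
    qed
    ultimately show "(i, j) = (q, 1)" using ij by simp
  qed
  moreover have "(1, j0) \<in> gens"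
  proof (rule inv_gensI)
    show "(1, j0) \<in> invs" using q_j0 by (simp add: mem_invs_iff cong_sym)
  next
    fix i j assume ij: "(i, j) \<in> invs" "i \<le> 1" "j \<le> j0"
    have "i \<noteq> 0"
    proof
      assume "i = 0"
      with ij have "p \<le> j" using p_le_snd_on_axis by simp
      with ij j0_less show False by simp
    qed
    with ij have "i = 1" "[i = q * j] (mod p)" by (simp_all add: mem_invs_iff)
    then have "[q * j = 1] (mod p)" by (simp add: cong_sym)
    with ij j0_less have "j = j0" using j0_unique by simp
    with \<open>i \<noteq> 0\<close> show "(i, j) = (1, j0)" using ij by simp
  qed
  ultimately show ?thesis by simp
qed

lemma gens_in_box:
  assumes "(i, j) \<in> gens" "(i, j) \<notin> corners"
  shows "0 < i \<and> i < q \<and> 0 < j \<and> j < j0"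
proof -
  have ij: "(i, j) \<in> invs" using assms(1) inv_gens_subset by blast
  have below_corner: "(i, j) = c" if "c \<in> corners" "fst c \<le> i" "snd c \<le> j" for c
    using inv_gens_minimal[OF assms(1)] that corners_subset_gens inv_gens_subset by fastforce
  have "i \<noteq> 0"
  proof
    assume "i = 0"
    with ij have "p \<le> j" using p_le_snd_on_axis by simp
    with \<open>i = 0\<close> assms(2) show False using below_corner[of "(0, p)"] by simp
  qed
  moreover have "j \<noteq> 0"
  proof
    assume "j = 0"
    with ij have "p \<le> i" using p_le_fst_on_axis by simp
    with \<open>j = 0\<close> assms(2) show False using below_corner[of "(p, 0)"] by simp
  qed
  moreover have "\<not> q \<le> i" using below_corner[of "(q, 1)"] \<open>j \<noteq> 0\<close> assms(2) by auto
  moreover have "\<not> j0 \<le> j" using below_corner[of "(1, j0)"] \<open>i \<noteq> 0\<close> assms(2) by auto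
  ultimately show ?thesis by simp
qed

lemma finite_gens: "finite gens"
proof (rule finite_subset)
  show "gens \<subseteq> {..p} \<times> {..p}"
    using gens_in_box q_less j0_less by fastforce
qed simp

lemma gens_eq_corners:
  assumes "q * j0 = p + 1"
  shows "gens = corners"
proof -
  have False if "(i, j) \<in> gens" "(i, j) \<notin> corners" for i j
  proof -
    have "0 < i" "i < q" "j < j0" using gens_in_box[OF that] by simp_all
    then have "p < q * j" using p_less_q_mult_snd that(1) inv_gens_subset by blast
    moreover have "q * j < q * j0" using \<open>j < j0\<close> q_pos by simp
    ultimately show False using assms by simp
  qed
  then show ?thesis using corners_subset_gens by auto
qed

lemma gen_outside_corners:
  assumes "1 < q" "q * j0 \<noteq> p + 1"
  obtains m where "m \<in> gens" "m \<notin> corners"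
proof -
  \<comment> \<open>k is the least j with p < q j\<close>
  define k where "k = p div q + 1"
  define r where "r = q - p mod q"
  have "\<not> q dvd p"
    using prime assms(1) q_less by (auto simp: prime_nat_iff)
  then have "0 < p mod q" by (simp add: mod_greater_zero_iff_not_dvd)
  moreover have "p mod q < q" using q_pos by simp
  ultimately have r_pos: "0 < r" and r_less: "r < q" by (simp_all add: r_def)
  have "q * k = q * (p div q) + q" by (simp add: k_def)
  with mult_div_mod_eq[of q p] \<open>p mod q < q\<close> have qk: "q * k = p + r"
    unfolding r_def by linarith
  have k_less: "k < p"
  proof (rule ccontr)
    assume "\<not> k < p"
    then have "2 * p \<le> q * k" using assms(1) mult_le_mono by fastforce
    with qk r_less q_less show False by simp
  qed
  have "(r, k) \<in> gens"
  proof (rule inv_gensI)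
    show "(r, k) \<in> invs" using qk r_pos by (simp add: mem_invs_iff cong_def)
  next
    fix i j assume ij: "(i, j) \<in> invs" "i \<le> r" "j \<le> k"
    have "i \<noteq> 0"
    proof
      assume "i = 0"
      with ij have "p \<le> j" using p_le_snd_on_axis by simp
      with ij k_less show False by simp
    qed
    with ij r_less have "p < q * j" using p_less_q_mult_snd by simp
    moreover have "q * (p div q) \<le> p" by (simp add: times_div_less_eq_dividend)
    ultimately have "p div q < j" by (meson le_less_trans mult_less_cancel1)
    with ij have "j = k" by (simp add: k_def)
    with ij qk have "[i = r] (mod p)" by (simp add: mem_invs_iff cong_def)
    from cong_less_imp_eq_nat[OF _ _ _ _ this] have "i = r"
      using ij r_less q_less by simp
    with \<open>j = k\<close> show "(i, j) = (r, k)" by simp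
  qed
  moreover have "r \<noteq> 1"
  proof
    assume "r = 1"
    with qk have "q * k = 1 + p" by simp
    then have "[q * k = 1] (mod p)" by (simp only: cong_def mod_add_self2)
    then have "k = j0" using k_less by (rule j0_unique)
    with qk \<open>r = 1\<close> assms(2) show False by simp
  qed
  with r_pos r_less q_less have "(r, k) \<notin> corners" by (auto simp: k_def)
  ultimately show thesis by (rule that)
qed

lemma card_corners: "card corners = (if q = 1 then 3 else 4)"
proof (cases "q = 1")
  case True
  then have "j0 = 1" using j0_unique[of 1] p_gt_1 by simp
  with True p_gt_1 show ?thesis by simp
next
  case False
  have "j0 \<noteq> 1"
  proof
    assume "j0 = 1"
    with q_j0 have "[q = 1] (mod p)" by simp
    from cong_less_imp_eq_nat[OF _ _ _ _ this] have "q = 1"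
      using q_less p_gt_1 by simp
    with False show False ..
  qed
  have "0 < j0" using q_j0 p_gt_1 by (cases j0) (simp_all add: cong_def)
  with False \<open>j0 \<noteq> 1\<close> q_pos p_gt_1 show ?thesis by auto
qed

theorem card_gens_eq_4_iff: "card gens = 4 \<longleftrightarrow> q * j0 = p + 1"
proof (cases "q * j0 = p + 1")
  case True
  then have "q \<noteq> 1" using j0_less by auto
  with True show ?thesis using gens_eq_corners card_corners by simp
next
  case False
  show ?thesis
  proof (cases "q = 1")
    case True
    then have "gens = corners" using corners_subset_gens gens_in_box by fastforce
    with True False show ?thesis using card_corners by simp
  next
    case q_ne_1: False
    with q_pos have "1 < q" by simp
    then obtain m where m: "m \<in> gens" "m \<notin> corners"
      using False by (rule gen_outside_corners)
    have "card (insert m corners) \<le> card gens"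
      using m corners_subset_gens finite_gens by (intro card_mono) auto
    with m q_ne_1 False show ?thesis using card_corners by simp
  qed
qed

end

lemma card_inv_gens_normal_eq_4_iff:
  fixes p q j0 :: int
  assumes "prime p" "0 < q" "q < p" "0 \<le> j0" "j0 < p" "[q * j0 = 1] (mod p)"
  shows "card (inv_gens p 1 (- q)) = 4 \<longleftrightarrow> q * j0 = p + 1"
proof -
  have "[int (nat q * nat j0) = int 1] (mod int (nat p))"
    using assms by (simp add: nat_mult_distrib[symmetric])
  then have "[nat q * nat j0 = 1] (mod nat p)"
    by (simp only: cong_int_iff)
  then interpret normal_action "nat p" "nat q" "nat j0"
    using assms by unfold_locales auto
  have "card (inv_gens p 1 (- q)) = 4 \<longleftrightarrow> int (nat q * nat j0) = int (nat p + 1)"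
    using card_gens_eq_4_iff assms by (simp only: of_nat_eq_iff) simp
  also have "\<dots> \<longleftrightarrow> q * j0 = p + 1"
    using assms by (auto simp: add.commute)
  finally show ?thesis .
qed

lemma inv_gens_normalize:
  assumes "coprime c p" "[a * c = 1] (mod p)" "[q = - (c * b)] (mod p)"
  shows "inv_gens p a b = inv_gens p 1 (- q)"
proof -
  have "[c * a = 1] (mod p)" using assms(2) by (simp add: mult.commute)
  moreover have "[c * b = - q] (mod p)"
    using cong_minus_minus_iff[of q "- (c * b)" p] assms(3) by (simp add: cong_sym_eq)
  ultimately have "invariant_mono p (c * a) (c * b) = invariant_mono p 1 (- q)"
    by (rule invariant_mono_cong)
  then have "invariant_mono p a b = invariant_mono p 1 (- q)"
    using invariant_mono_mult[OF assms(1)] by simp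
  then show ?thesis by (rule inv_gens_eqI)
qed

lemma residue_of_neg:
  fixes p x :: int
  assumes "0 < p" "\<not> p dvd x"
  shows "0 < p - x mod p" "p - x mod p < p" "[p - x mod p = - x] (mod p)"
proof -
  have "x mod p \<noteq> 0" using assms(2) by (simp add: dvd_eq_mod_eq_0)
  moreover have "0 \<le> x mod p" "x mod p < p" using assms(1) by simp_all
  ultimately show "0 < p - x mod p" "p - x mod p < p" by simp_all
  from \<open>x mod p \<noteq> 0\<close> have "(- x) mod p = p - x mod p"
    by (simp add: zmod_zminus1_eq_if)
  also have "\<dots> = (p - x mod p) mod p"
    using \<open>0 < p - x mod p\<close> \<open>p - x mod p < p\<close> by (simp only: mod_pos_pos_trivial)
  finally show "[p - x mod p = - x] (mod p)"
    unfolding cong_def by (rule sym)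
qed

lemma cong_neg_cross_products_inverse:
  fixes a a' b b' q j0 p :: int
  assumes "[a * a' = 1] (mod p)" "[b * b' = 1] (mod p)"
    and "[q = - (a' * b)] (mod p)" "[j0 = - (a * b')] (mod p)"
  shows "[q * j0 = 1] (mod p)"
proof -
  have "[q * j0 = (- (a' * b)) * (- (a * b'))] (mod p)"
    using assms(3,4) by (rule cong_mult)
  also have "(- (a' * b)) * (- (a * b')) = (a * a') * (b * b')"
    by (simp add: algebra_simps)
  also have "[\<dots> = 1 * 1] (mod p)"
    using assms(1,2) by (rule cong_mult)
  finally show ?thesis by simp
qed

theorem theorem1p2:
  fixes p a b :: int
  assumes "prime p" and "0 < a" and "a < p" and "0 < b" and "b < p"
  shows "card (inv_gens p a b) = 4 \<longleftrightarrow>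
         (p - (inv_modp p a * b) mod p) * (p - (a * inv_modp p b) mod p) = p + 1"
proof -
  define a' b' where "a' = inv_modp p a" and "b' = inv_modp p b"
  define q j0 where "q = p - (a' * b) mod p" and "j0 = p - (a * b') mod p"
  have not_dvd: "\<not> p dvd x" if "0 < x" "x < p" for x
    using that by (auto dest: zdvd_imp_le)
  have a': "0 < a'" "a' < p" "[a * a' = 1] (mod p)"
    and b': "0 < b'" "b' < p" "[b * b' = 1] (mod p)"
    using inv_modp_correct[OF \<open>prime p\<close>] not_dvd assms by (simp_all add: a'_def b'_def)
  have "\<not> p dvd a' * b" "\<not> p dvd a * b'"
    using not_dvd a' b' assms by (simp_all add: prime_dvd_mult_iff)
  then have q: "0 < q" "q < p" "[q = - (a' * b)] (mod p)"
    and j0: "0 < j0" "j0 < p" "[j0 = - (a * b')] (mod p)"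
    using residue_of_neg assms by (simp_all add: q_def j0_def)
  have "coprime a' p"
    using not_dvd a' \<open>prime p\<close> prime_imp_coprime coprime_commute by blast
  then have "inv_gens p a b = inv_gens p 1 (- q)"
    using a'(3) q(3) by (rule inv_gens_normalize)
  moreover have "[q * j0 = 1] (mod p)"
    using a'(3) b'(3) q(3) j0(3) by (rule cong_neg_cross_products_inverse)
  ultimately have "card (inv_gens p a b) = 4 \<longleftrightarrow> q * j0 = p + 1"
    using card_inv_gens_normal_eq_4_iff[of p q j0] assms(1) q j0 by simp
  then show ?thesis
    by (simp only: q_def j0_def a'_def b'_def)
qed

end
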